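(* Let $H$ be a locally compact abelian group, $X$ a compact metric space, $\sigma=(\sigma_1,\dots,\sigma_k)$ a $k$-tuple of pairwise commuting surjective local homeomorphisms of $X$, and $\varphi=(\varphi_1,\dots,\varphi_k)$ a $k$-tuple in $C(X,H)$. The following are equivalent: (1) $\varphi_i+\varphi_j\circ\sigma_i=\varphi_j+\varphi_i\circ\sigma_j$ for all $i,j\in\{1,\dots,k\}$; (2) there exists a unique continuous $H$-valued $1$-cocycle $c$ on $\mathcal{G}(X,\sigma)$ with $c(x,\mathbf{e}_i,\sigma_i(x))=\varphi_i(x)$ for all $i\in\{1,\dots,k\}$ and $x\in X$. Moreover, every continuous $H$-valued $1$-cocycle on $\mathcal{G}(X,\sigma)$ arises in this way from some $k$-tuple $\varphi$ satisfying (1), and a continuous $1$-cocycle $c$ on $\mathcal{G}(X,\sigma)$ is a coboundary if and only if there exists $\psi\in C(X,H)$ with $c(x,\mathbf{e}_i,\sigma_i(x))=\psi(x)-\psi(\sigma_i(x))$ for all $i\in\{1,\dots,k\}$ and $x\in X$.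
   Context: For $n=(n_1,\dots,n_k)\in\mathbb{N}^k$ write $\sigma^n=\sigma_1^{n_1}\circ\cdots\circ\sigma_k^{n_k}$, and $\mathbf{e}_i$ for the canonical generators of $\mathbb{N}^k$. The groupoid $\mathcal{G}(X,\sigma)=\{(x,p-q,y)\in X\times\mathbb{Z}^k\times X : p,q\in\mathbb{N}^k,\ \sigma^p(x)=\sigma^q(y)\}$ has unit space $X$ (via $x\mapsto(x,0,x)$), $r(x,n,y)=x$, $s(x,n,y)=y$, $(x,m,y)^{-1}=(y,-m,x)$, $(x,m,y)(y,n,z)=(x,m+n,z)$, and topology with basis $U\times\{p-q\}\times V$ for $U,V\subseteq X$ open with $\sigma^p(U)=\sigma^q(V)$; it is an étale locally compact Hausdorff groupoid. A continuous $H$-valued $1$-cocycle on a topological groupoid $\mathcal{G}$ is a continuous map $c:\mathcal{G}\to H$ with $c(\gamma\gamma')=c(\gamma)+c(\gamma')$ for composable pairs; it is a coboundary if $c(\gamma)=f(r(\gamma))-f(s(\gamma))$ for some continuous $f$ on the unit space. *)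

theory Defs
  imports "HOL-Analysis.Analysis"
begin

definition local_homeo_on :: "'a::topological_space set \<Rightarrow> ('a \<Rightarrow> 'a) \<Rightarrow> bool" where
  "local_homeo_on X f \<longleftrightarrow> (\<forall>x\<in>X. \<exists>U g. x \<in> U \<and> openin (top_of_set X) U \<and>
      openin (top_of_set X) (f ` U) \<and> homeomorphism U (f ` U) f g)"

text \<open>Multi-indices in \<open>\<nat>^k\<close> are functions \<open>nat \<Rightarrow> nat\<close> vanishing at indices \<open>\<ge> k\<close>;
  elements of \<open>\<int>^k\<close> likewise as functions \<open>nat \<Rightarrow> int\<close>. Indices are \<open>0..k-1\<close>.\<close>
definition idx :: "nat \<Rightarrow> (nat \<Rightarrow> 'b::zero) \<Rightarrow> bool" where
  "idx k p \<longleftrightarrow> (\<forall>i\<ge>k. p i = 0)"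

fun spow :: "(nat \<Rightarrow> 'a \<Rightarrow> 'a) \<Rightarrow> nat \<Rightarrow> (nat \<Rightarrow> nat) \<Rightarrow> 'a \<Rightarrow> 'a" where
  "spow \<sigma> 0 p = id"
| "spow \<sigma> (Suc k) p = spow \<sigma> k p \<circ> (\<sigma> k ^^ p k)"

definition vdiff :: "(nat \<Rightarrow> nat) \<Rightarrow> (nat \<Rightarrow> nat) \<Rightarrow> (nat \<Rightarrow> int)" where
  "vdiff p q = (\<lambda>i. int (p i) - int (q i))"

definition unitvec :: "nat \<Rightarrow> nat \<Rightarrow> int" where
  "unitvec i = (\<lambda>j. if j = i then 1 else 0)"

definition grpd :: "'a set \<Rightarrow> (nat \<Rightarrow> 'a \<Rightarrow> 'a) \<Rightarrow> nat \<Rightarrow> ('a \<times> (nat \<Rightarrow> int) \<times> 'a) set" where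
  "grpd X \<sigma> k = {(x, m, y). x \<in> X \<and> y \<in> X \<and>
     (\<exists>p q. idx k p \<and> idx k q \<and> m = vdiff p q \<and> spow \<sigma> k p x = spow \<sigma> k q y)}"

definition Zset :: "(nat \<Rightarrow> 'a \<Rightarrow> 'a) \<Rightarrow> nat \<Rightarrow> 'a set \<Rightarrow> (nat \<Rightarrow> nat) \<Rightarrow> (nat \<Rightarrow> nat) \<Rightarrow> 'a set
     \<Rightarrow> ('a \<times> (nat \<Rightarrow> int) \<times> 'a) set" where
  "Zset \<sigma> k U p q V = {(x, vdiff p q, y) | x y. x \<in> U \<and> y \<in> V \<and> spow \<sigma> k p x = spow \<sigma> k q y}"

definition grpd_basis :: "'a::topological_space set \<Rightarrow> (nat \<Rightarrow> 'a \<Rightarrow> 'a) \<Rightarrow> nat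
     \<Rightarrow> ('a \<times> (nat \<Rightarrow> int) \<times> 'a) set set" where
  "grpd_basis X \<sigma> k = {Zset \<sigma> k U p q V | U p q V.
     openin (top_of_set X) U \<and> openin (top_of_set X) V \<and> idx k p \<and> idx k q \<and>
     spow \<sigma> k p ` U = spow \<sigma> k q ` V}"

definition grpd_top :: "'a::topological_space set \<Rightarrow> (nat \<Rightarrow> 'a \<Rightarrow> 'a) \<Rightarrow> nat
     \<Rightarrow> ('a \<times> (nat \<Rightarrow> int) \<times> 'a) topology" where
  "grpd_top X \<sigma> k = subtopology (topology_generated_by (grpd_basis X \<sigma> k)) (grpd X \<sigma> k)"

text \<open>Continuous \<open>H\<close>-valued 1-cocycles on \<open>\<G>(X,\<sigma>)\<close> (only values on the groupoid matter).\<close>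
definition cont_cocycle :: "'a::topological_space set \<Rightarrow> (nat \<Rightarrow> 'a \<Rightarrow> 'a) \<Rightarrow> nat
     \<Rightarrow> ('a \<times> (nat \<Rightarrow> int) \<times> 'a \<Rightarrow> 'h::topological_ab_group_add) \<Rightarrow> bool" where
  "cont_cocycle X \<sigma> k c \<longleftrightarrow>
     continuous_map (grpd_top X \<sigma> k) euclidean c \<and>
     (\<forall>x m y n z. (x, m, y) \<in> grpd X \<sigma> k \<longrightarrow> (y, n, z) \<in> grpd X \<sigma> k \<longrightarrow>
        c (x, (\<lambda>i. m i + n i), z) = c (x, m, y) + c (y, n, z))"

definition coboundary :: "'a::topological_space set \<Rightarrow> (nat \<Rightarrow> 'a \<Rightarrow> 'a) \<Rightarrow> nat
     \<Rightarrow> ('a \<times> (nat \<Rightarrow> int) \<times> 'a \<Rightarrow> 'h::topological_ab_group_add) \<Rightarrow> bool" where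
  "coboundary X \<sigma> k c \<longleftrightarrow>
     (\<exists>f. continuous_on X f \<and> (\<forall>x m y. (x, m, y) \<in> grpd X \<sigma> k \<longrightarrow> c (x, m, y) = f x - f y))"

end

theory Submission
  imports Defs
begin

text \<open>An arrow \<open>(x, p - q, y)\<close> of \<open>\<G>(X,\<sigma>)\<close> factors as the path \<open>(x, p, \<sigma>^p x)\<close> followed by
  the inverse of the path \<open>(y, q, \<sigma>^q y)\<close>, and every path is a product of generators
  \<open>(z, e\<^sub>i, \<sigma>\<^sub>i z)\<close>; so a cocycle is determined by its values \<open>\<phi>\<^sub>i\<close> on the generators, and these
  satisfy the compatibility condition (1) because \<open>\<sigma>\<^sub>i\<close> and \<open>\<sigma>\<^sub>j\<close> commute. Conversely, (1) makes the
  sum \<open>\<Phi>\<^sub>p(x)\<close> of the \<open>\<phi>\<^sub>i\<close> along a monotone lattice path from \<open>0\<close> to \<open>p\<close> independent of the path,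
  with \<open>\<Phi>\<^sub>p\<^sub>+\<^sub>r(x) = \<Phi>\<^sub>r(x) + \<Phi>\<^sub>p(\<sigma>^r x)\<close>, and \<open>c(x, p - q, y) = \<Phi>\<^sub>p(x) - \<Phi>\<^sub>q(y)\<close> is then a
  well-defined cocycle. It is continuous since on a basic open set \<open>Z(U, p, q, V)\<close> it is given by
  this formula with \<open>p\<close>, \<open>q\<close> fixed. A cocycle agreeing on the generators with the coboundary of
  \<open>\<psi>\<close> is that coboundary.\<close>

lemma image_Int_vimage: "f ` (A \<inter> f -` C) = f ` A \<inter> C"
  by auto

definition unitvec_nat :: "nat \<Rightarrow> nat \<Rightarrow> nat" where
  "unitvec_nat i = (\<lambda>j. if j = i then 1 else 0)"

lemma idx_zero: "idx k (\<lambda>_. 0)"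
  by (simp add: idx_def)

lemma idx_unitvec_nat: "i < k \<Longrightarrow> idx k (unitvec_nat i)"
  by (auto simp: idx_def unitvec_nat_def)

lemma unitvec_eq_vdiff: "unitvec i = vdiff (unitvec_nat i) (\<lambda>_. 0)"
  by (auto simp: vdiff_def unitvec_def unitvec_nat_def)

lemma vdiff_eq_unitvec_imp: "unitvec i = vdiff p q \<Longrightarrow> p = (\<lambda>l. q l + unitvec_nat i l)"
proof (rule ext)
  fix l assume "unitvec i = vdiff p q"
  then have "int (p l) - int (q l) = (if l = i then 1 else 0)"
    by (simp add: unitvec_def vdiff_def fun_eq_iff)
  then show "p l = q l + unitvec_nat i l" by (simp add: unitvec_nat_def split: if_splits)
qed

lemma idx_induct [consumes 1, case_names zero step]:
  assumes "idx k r" and "P (\<lambda>_. 0)"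
    and "\<And>r i. idx k r \<Longrightarrow> i < k \<Longrightarrow> P r \<Longrightarrow> P (\<lambda>l. r l + unitvec_nat i l)"
  shows "P r"
  using assms(1)
proof (induction "sum r {..<k}" arbitrary: r)
  case 0
  then have "r = (\<lambda>_. 0)"
    unfolding idx_def fun_eq_iff by (metis finite_lessThan lessThan_iff not_less sum_eq_0_iff)
  then show ?case using assms(2) by simp
next
  case (Suc n)
  then obtain i where i: "i < k" "r i > 0"
    by (metis lessThan_iff not_gr0 sum.neutral nat.distinct(1))
  define r' where "r' = r(i := r i - 1)"
  have r: "r = (\<lambda>l. r' l + unitvec_nat i l)"
    using i by (auto simp: r'_def unitvec_nat_def)
  have idx: "idx k r'" using Suc.prems i by (auto simp: idx_def r'_def)
  have "sum r {..<k} = sum r' {..<k} + sum (unitvec_nat i) {..<k}"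
    by (subst r) (simp add: sum.distrib)
  also have "sum (unitvec_nat i) {..<k} = 1"
    using i by (simp add: unitvec_nat_def)
  finally have "P r'" using Suc.hyps idx by simp
  then show ?case using assms(3)[OF idx i(1)] r by simp
qed

lemma spow_cong: "(\<And>l. l < k \<Longrightarrow> p l = p' l) \<Longrightarrow> spow \<sigma> k p = spow \<sigma> k p'"
  by (induction k) auto

lemma spow_zero: "spow \<sigma> k (\<lambda>_. 0) = id"
  by (induction k) auto

text \<open>\<open>path_sum \<phi> \<sigma> k p x\<close> sums the \<open>\<phi>\<^sub>i\<close> along the lattice path from \<open>0\<close> to \<open>p\<close> that first
  increases coordinate \<open>k - 1\<close>, then \<open>k - 2\<close>, and so on, following the order in which \<open>spow\<close>
  applies the \<open>\<sigma>\<^sub>i\<close>.\<close>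

fun orbit_sum :: "(nat \<Rightarrow> 'a \<Rightarrow> 'h::comm_monoid_add) \<Rightarrow> (nat \<Rightarrow> 'a \<Rightarrow> 'a) \<Rightarrow> nat \<Rightarrow> nat \<Rightarrow> 'a \<Rightarrow> 'h" where
  "orbit_sum \<phi> \<sigma> i 0 x = 0"
| "orbit_sum \<phi> \<sigma> i (Suc n) x = orbit_sum \<phi> \<sigma> i n x + \<phi> i ((\<sigma> i ^^ n) x)"

fun path_sum :: "(nat \<Rightarrow> 'a \<Rightarrow> 'h::comm_monoid_add) \<Rightarrow> (nat \<Rightarrow> 'a \<Rightarrow> 'a) \<Rightarrow> nat \<Rightarrow> (nat \<Rightarrow> nat) \<Rightarrow> 'a \<Rightarrow> 'h" where
  "path_sum \<phi> \<sigma> 0 p x = 0"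
| "path_sum \<phi> \<sigma> (Suc k) p x = orbit_sum \<phi> \<sigma> k (p k) x + path_sum \<phi> \<sigma> k p ((\<sigma> k ^^ p k) x)"

lemma orbit_sum_Suc': "orbit_sum \<phi> \<sigma> i (Suc n) x = \<phi> i x + orbit_sum \<phi> \<sigma> i n (\<sigma> i x)"
  by (induction n) (simp_all add: add.assoc funpow_swap1)

lemma path_sum_cong: "(\<And>l. l < k \<Longrightarrow> p l = p' l) \<Longrightarrow> path_sum \<phi> \<sigma> k p = path_sum \<phi> \<sigma> k p'"
  by (induction k) (auto simp: fun_eq_iff)

lemma path_sum_zero: "path_sum \<phi> \<sigma> k (\<lambda>_. 0) x = 0"
  by (induction k arbitrary: x) auto

text \<open>The representation \<open>(p, q)\<close> of an arrow is picked by \<open>SOME\<close>; for compatible \<open>\<phi>\<close> the value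
  does not depend on this choice (\<open>cocycle_of_eq\<close>).\<close>

definition cocycle_of :: "nat \<Rightarrow> (nat \<Rightarrow> 'a \<Rightarrow> 'a) \<Rightarrow> (nat \<Rightarrow> 'a \<Rightarrow> 'h::ab_group_add)
    \<Rightarrow> 'a \<times> (nat \<Rightarrow> int) \<times> 'a \<Rightarrow> 'h" where
  "cocycle_of k \<sigma> \<phi> = (\<lambda>(x, m, y).
     let (p, q) = (SOME (p, q). idx k p \<and> idx k q \<and> m = vdiff p q \<and> spow \<sigma> k p x = spow \<sigma> k q y)
     in path_sum \<phi> \<sigma> k p x - path_sum \<phi> \<sigma> k q y)"

locale commuting_maps =
  fixes X :: "'a set" and \<sigma> :: "nat \<Rightarrow> 'a \<Rightarrow> 'a" and k :: nat
  assumes maps_into: "i < k \<Longrightarrow> x \<in> X \<Longrightarrow> \<sigma> i x \<in> X"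
    and commute: "i < k \<Longrightarrow> j < k \<Longrightarrow> x \<in> X \<Longrightarrow> \<sigma> i (\<sigma> j x) = \<sigma> j (\<sigma> i x)"
begin

lemma funpow_maps_into: "i < k \<Longrightarrow> x \<in> X \<Longrightarrow> (\<sigma> i ^^ n) x \<in> X"
  by (induction n) (auto intro: maps_into)

lemma funpow_commute: "i < k \<Longrightarrow> j < k \<Longrightarrow> x \<in> X \<Longrightarrow> (\<sigma> i ^^ n) (\<sigma> j x) = \<sigma> j ((\<sigma> i ^^ n) x)"
  by (induction n) (auto simp: commute funpow_maps_into)

lemma spow_maps_into: "k' \<le> k \<Longrightarrow> x \<in> X \<Longrightarrow> spow \<sigma> k' p x \<in> X"
  by (induction k' arbitrary: x) (auto simp: funpow_maps_into)

lemma spow_add_unitvec_nat: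
  "k' \<le> k \<Longrightarrow> i < k' \<Longrightarrow> x \<in> X \<Longrightarrow> spow \<sigma> k' (\<lambda>l. p l + unitvec_nat i l) x = spow \<sigma> k' p (\<sigma> i x)"
proof (induction k' arbitrary: x)
  case 0
  then show ?case by simp
next
  case (Suc k')
  have unchanged: "spow \<sigma> k' (\<lambda>l. p l + unitvec_nat k' l) = spow \<sigma> k' p"
    by (rule spow_cong) (simp add: unitvec_nat_def)
  show ?case
  proof (cases "i = k'")
    case True
    then show ?thesis
      by (simp only: spow.simps comp_def unchanged) (simp add: unitvec_nat_def funpow_swap1)
  next
    case False
    then show ?thesis
      using Suc by (simp add: unitvec_nat_def funpow_maps_into funpow_commute)
  qed
qed

lemma spow_unitvec_nat: "i < k \<Longrightarrow> x \<in> X \<Longrightarrow> spow \<sigma> k (unitvec_nat i) x = \<sigma> i x"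
  using spow_add_unitvec_nat[of k i x "\<lambda>_. 0"] by (simp add: spow_zero)

lemma spow_add: "idx k r \<Longrightarrow> x \<in> X \<Longrightarrow> spow \<sigma> k (\<lambda>l. p l + r l) x = spow \<sigma> k p (spow \<sigma> k r x)"
proof (induction r arbitrary: x rule: idx_induct)
  case zero
  then show ?case by (simp add: spow_zero)
next
  case (step r i)
  have "spow \<sigma> k (\<lambda>l. p l + (r l + unitvec_nat i l)) x = spow \<sigma> k (\<lambda>l. (p l + r l) + unitvec_nat i l) x"
    by (simp add: add.assoc)
  also have "\<dots> = spow \<sigma> k p (spow \<sigma> k r (\<sigma> i x))"
    using step maps_into by (simp add: spow_add_unitvec_nat)
  also have "\<dots> = spow \<sigma> k p (spow \<sigma> k (\<lambda>l. r l + unitvec_nat i l) x)"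
    using step by (simp add: spow_add_unitvec_nat)
  finally show ?case .
qed

lemma spow_swap: "idx k p \<Longrightarrow> idx k r \<Longrightarrow> x \<in> X \<Longrightarrow> spow \<sigma> k p (spow \<sigma> k r x) = spow \<sigma> k r (spow \<sigma> k p x)"
  using spow_add[of r x p] spow_add[of p x r] by (simp add: add.commute)

lemma grpd_memI:
  "idx k p \<Longrightarrow> idx k q \<Longrightarrow> x \<in> X \<Longrightarrow> y \<in> X \<Longrightarrow> spow \<sigma> k p x = spow \<sigma> k q y
     \<Longrightarrow> (x, vdiff p q, y) \<in> grpd X \<sigma> k"
  unfolding grpd_def by blast

lemma generator_in_grpd: "i < k \<Longrightarrow> x \<in> X \<Longrightarrow> (x, unitvec i, \<sigma> i x) \<in> grpd X \<sigma> k"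
  using grpd_memI[of "unitvec_nat i" "\<lambda>_. 0" x "\<sigma> i x"]
  by (simp add: unitvec_eq_vdiff idx_unitvec_nat idx_zero spow_unitvec_nat spow_zero maps_into)

lemma path_in_grpd: "idx k p \<Longrightarrow> x \<in> X \<Longrightarrow> (x, \<lambda>l. int (p l), spow \<sigma> k p x) \<in> grpd X \<sigma> k"
  using grpd_memI[of p "\<lambda>_. 0" x "spow \<sigma> k p x"]
  by (simp add: vdiff_def idx_zero spow_zero spow_maps_into)

lemma inverse_path_in_grpd: "idx k q \<Longrightarrow> y \<in> X \<Longrightarrow> (spow \<sigma> k q y, \<lambda>l. - int (q l), y) \<in> grpd X \<sigma> k"
  using grpd_memI[of "\<lambda>_. 0" q "spow \<sigma> k q y" y]
  by (simp add: vdiff_def idx_zero spow_zero spow_maps_into)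

lemma unit_in_grpd: "x \<in> X \<Longrightarrow> (x, \<lambda>_. 0, x) \<in> grpd X \<sigma> k"
  using path_in_grpd[OF idx_zero, of x] by (simp add: spow_zero)

definition is_cocycle :: "('a \<times> (nat \<Rightarrow> int) \<times> 'a \<Rightarrow> 'h::ab_group_add) \<Rightarrow> bool" where
  "is_cocycle c \<longleftrightarrow> (\<forall>x m y n z. (x, m, y) \<in> grpd X \<sigma> k \<longrightarrow> (y, n, z) \<in> grpd X \<sigma> k \<longrightarrow>
        c (x, (\<lambda>i. m i + n i), z) = c (x, m, y) + c (y, n, z))"

definition compatible :: "(nat \<Rightarrow> 'a \<Rightarrow> 'h::ab_group_add) \<Rightarrow> bool" where
  "compatible \<phi> \<longleftrightarrow> (\<forall>i<k. \<forall>j<k. \<forall>x\<in>X. \<phi> i x + \<phi> j (\<sigma> i x) = \<phi> j x + \<phi> i (\<sigma> j x))"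

lemma is_cocycleD:
  "is_cocycle c \<Longrightarrow> (x, m, y) \<in> grpd X \<sigma> k \<Longrightarrow> (y, n, z) \<in> grpd X \<sigma> k \<Longrightarrow>
     c (x, (\<lambda>i. m i + n i), z) = c (x, m, y) + c (y, n, z)"
  unfolding is_cocycle_def by blast

lemma is_cocycle_unit: "is_cocycle c \<Longrightarrow> x \<in> X \<Longrightarrow> c (x, \<lambda>_. 0, x) = 0"
  using is_cocycleD[OF _ unit_in_grpd unit_in_grpd, of c x] by simp

lemma is_cocycle_path_add_unitvec:
  assumes "is_cocycle c" "idx k r" "i < k" "x \<in> X"
  shows "c (x, \<lambda>l. int (r l + unitvec_nat i l), spow \<sigma> k (\<lambda>l. r l + unitvec_nat i l) x)
       = c (x, unitvec i, \<sigma> i x) + c (\<sigma> i x, \<lambda>l. int (r l), spow \<sigma> k r (\<sigma> i x))"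
proof -
  have "(\<lambda>l. int (r l + unitvec_nat i l)) = (\<lambda>l. unitvec i l + int (r l))"
    by (auto simp: unitvec_def unitvec_nat_def)
  then show ?thesis
    using assms is_cocycleD[OF assms(1) generator_in_grpd path_in_grpd]
    by (simp add: spow_add_unitvec_nat maps_into)
qed

lemma is_cocycle_path_eq:
  assumes "is_cocycle c" "is_cocycle c'"
    and "\<And>i x. i < k \<Longrightarrow> x \<in> X \<Longrightarrow> c (x, unitvec i, \<sigma> i x) = c' (x, unitvec i, \<sigma> i x)"
  shows "idx k p \<Longrightarrow> x \<in> X \<Longrightarrow> c (x, \<lambda>l. int (p l), spow \<sigma> k p x) = c' (x, \<lambda>l. int (p l), spow \<sigma> k p x)"
proof (induction p arbitrary: x rule: idx_induct)
  case zero
  then show ?case using assms by (simp add: spow_zero is_cocycle_unit)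
next
  case (step r i)
  have "c (\<sigma> i x, \<lambda>l. int (r l), spow \<sigma> k r (\<sigma> i x)) = c' (\<sigma> i x, \<lambda>l. int (r l), spow \<sigma> k r (\<sigma> i x))"
    using step maps_into by blast
  then show ?case
    unfolding is_cocycle_path_add_unitvec[OF assms(1) step.hyps(1,2) step.prems]
      is_cocycle_path_add_unitvec[OF assms(2) step.hyps(1,2) step.prems]
    using assms(3) step by simp
qed

lemma is_cocycle_split:
  assumes c: "is_cocycle c" and "idx k p" "idx k q" "x \<in> X" "y \<in> X" and eq: "spow \<sigma> k p x = spow \<sigma> k q y"
  shows "c (x, vdiff p q, y) = c (x, \<lambda>l. int (p l), spow \<sigma> k p x) - c (y, \<lambda>l. int (q l), spow \<sigma> k q y)"
proof -
  define z where "z = spow \<sigma> k q y"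
  have to_z: "(x, \<lambda>l. int (p l), z) \<in> grpd X \<sigma> k"
    using path_in_grpd[of p x] assms by (simp add: z_def)
  have from_z: "(z, \<lambda>l. - int (q l), y) \<in> grpd X \<sigma> k" "(y, \<lambda>l. int (q l), z) \<in> grpd X \<sigma> k"
    using inverse_path_in_grpd path_in_grpd assms by (simp_all add: z_def)
  have "z \<in> X" using assms by (simp add: z_def spow_maps_into)
  have "c (x, vdiff p q, y) = c (x, \<lambda>l. int (p l), z) + c (z, \<lambda>l. - int (q l), y)"
    using is_cocycleD[OF c to_z from_z(1)] by (simp add: vdiff_def)
  moreover have "c (z, \<lambda>l. - int (q l), y) + c (y, \<lambda>l. int (q l), z) = 0"
    using is_cocycleD[OF c from_z] is_cocycle_unit[OF c \<open>z \<in> X\<close>] by simp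
  ultimately show ?thesis
    using eq by (simp add: z_def eq_neg_iff_add_eq_0 [symmetric])
qed

lemma is_cocycle_eqI:
  assumes "is_cocycle c" "is_cocycle c'"
    and "\<And>i x. i < k \<Longrightarrow> x \<in> X \<Longrightarrow> c (x, unitvec i, \<sigma> i x) = c' (x, unitvec i, \<sigma> i x)"
    and "g \<in> grpd X \<sigma> k"
  shows "c g = c' g"
proof -
  obtain x p q y where g: "g = (x, vdiff p q, y)" "idx k p" "idx k q" "x \<in> X" "y \<in> X"
      "spow \<sigma> k p x = spow \<sigma> k q y"
    using assms(4) unfolding grpd_def by blast
  show ?thesis
    using g is_cocycle_split[OF assms(1) g(2-6)] is_cocycle_split[OF assms(2) g(2-6)]
      is_cocycle_path_eq[OF assms(1-3) g(2,4)] is_cocycle_path_eq[OF assms(1-3) g(3,5)] by simp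
qed

lemma compatible_generators:
  assumes c: "is_cocycle c"
  shows "compatible (\<lambda>i x. c (x, unitvec i, \<sigma> i x))"
  unfolding compatible_def
proof (intro allI impI ballI)
  fix i j x assume ij: "i < k" "j < k" and x: "x \<in> X"
  have "c (x, unitvec i, \<sigma> i x) + c (\<sigma> i x, unitvec j, \<sigma> j (\<sigma> i x))
      = c (x, \<lambda>l. unitvec i l + unitvec j l, \<sigma> j (\<sigma> i x))"
    using is_cocycleD[OF c generator_in_grpd generator_in_grpd] ij x maps_into by simp
  also have "\<dots> = c (x, \<lambda>l. unitvec j l + unitvec i l, \<sigma> i (\<sigma> j x))"
    using ij x by (simp add: commute add.commute)
  also have "\<dots> = c (x, unitvec j, \<sigma> j x) + c (\<sigma> j x, unitvec i, \<sigma> i (\<sigma> j x))"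
    using is_cocycleD[OF c generator_in_grpd generator_in_grpd] ij x maps_into by simp
  finally show "c (x, unitvec i, \<sigma> i x) + c (\<sigma> i x, unitvec j, \<sigma> j (\<sigma> i x))
      = c (x, unitvec j, \<sigma> j x) + c (\<sigma> j x, unitvec i, \<sigma> i (\<sigma> j x))" .
qed

context
  fixes \<phi> :: "nat \<Rightarrow> 'a \<Rightarrow> 'h::ab_group_add"
  assumes compatible: "compatible \<phi>"
begin

lemma orbit_sum_commute:
  assumes "i < k" "j < k" "x \<in> X"
  shows "orbit_sum \<phi> \<sigma> j n x + \<phi> i ((\<sigma> j ^^ n) x) = \<phi> i x + orbit_sum \<phi> \<sigma> j n (\<sigma> i x)"
proof (induction n)
  case 0
  then show ?case by simp
next
  case (Suc n)
  define y where "y = (\<sigma> j ^^ n) x"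
  have "y \<in> X" using assms by (simp add: y_def funpow_maps_into)
  have "orbit_sum \<phi> \<sigma> j (Suc n) x + \<phi> i ((\<sigma> j ^^ Suc n) x)
      = orbit_sum \<phi> \<sigma> j n x + (\<phi> j y + \<phi> i (\<sigma> j y))"
    by (simp add: y_def add.assoc)
  also have "\<dots> = (orbit_sum \<phi> \<sigma> j n x + \<phi> i y) + \<phi> j (\<sigma> i y)"
    using compatible assms \<open>y \<in> X\<close> unfolding compatible_def by (simp add: add.assoc)
  also have "\<dots> = \<phi> i x + orbit_sum \<phi> \<sigma> j n (\<sigma> i x) + \<phi> j ((\<sigma> j ^^ n) (\<sigma> i x))"
    using Suc assms by (simp add: y_def funpow_commute)
  finally show ?case by (simp add: add.assoc)
qed

lemma path_sum_add_unitvec_nat: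
  "k' \<le> k \<Longrightarrow> i < k' \<Longrightarrow> x \<in> X \<Longrightarrow>
     path_sum \<phi> \<sigma> k' (\<lambda>l. p l + unitvec_nat i l) x = \<phi> i x + path_sum \<phi> \<sigma> k' p (\<sigma> i x)"
proof (induction k' arbitrary: x)
  case 0
  then show ?case by simp
next
  case (Suc k')
  have unchanged: "path_sum \<phi> \<sigma> k' (\<lambda>l. p l + unitvec_nat k' l) = path_sum \<phi> \<sigma> k' p"
    by (rule path_sum_cong) (simp add: unitvec_nat_def)
  show ?case
  proof (cases "i = k'")
    case True
    then have "path_sum \<phi> \<sigma> (Suc k') (\<lambda>l. p l + unitvec_nat i l) x
        = orbit_sum \<phi> \<sigma> k' (Suc (p k')) x + path_sum \<phi> \<sigma> k' p ((\<sigma> k' ^^ Suc (p k')) x)"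
      by (simp only: path_sum.simps unchanged) (simp add: unitvec_nat_def)
    also have "\<dots> = \<phi> i x + path_sum \<phi> \<sigma> (Suc k') p (\<sigma> i x)"
      using True by (simp only: orbit_sum_Suc') (simp add: funpow_swap1 add.assoc)
    finally show ?thesis .
  next
    case False
    then have "i < k'" using Suc.prems by simp
    define y where "y = (\<sigma> k' ^^ p k') x"
    have "y \<in> X" using Suc.prems by (simp add: y_def funpow_maps_into)
    have "path_sum \<phi> \<sigma> (Suc k') (\<lambda>l. p l + unitvec_nat i l) x
        = (orbit_sum \<phi> \<sigma> k' (p k') x + \<phi> i y) + path_sum \<phi> \<sigma> k' p (\<sigma> i y)"
      using False Suc \<open>i < k'\<close> \<open>y \<in> X\<close> by (simp add: unitvec_nat_def y_def add.assoc)
    also have "\<dots> = \<phi> i x + path_sum \<phi> \<sigma> (Suc k') p (\<sigma> i x)"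
      using Suc.prems \<open>i < k'\<close>
      by (simp add: y_def orbit_sum_commute funpow_commute add.assoc)
    finally show ?thesis .
  qed
qed

lemma path_sum_add:
  "idx k r \<Longrightarrow> x \<in> X \<Longrightarrow>
     path_sum \<phi> \<sigma> k (\<lambda>l. p l + r l) x = path_sum \<phi> \<sigma> k r x + path_sum \<phi> \<sigma> k p (spow \<sigma> k r x)"
proof (induction r arbitrary: x rule: idx_induct)
  case zero
  then show ?case by (simp add: spow_zero path_sum_zero)
next
  case (step r i)
  have "path_sum \<phi> \<sigma> k (\<lambda>l. p l + (r l + unitvec_nat i l)) x
      = path_sum \<phi> \<sigma> k (\<lambda>l. (p l + r l) + unitvec_nat i l) x"
    by (simp add: add.assoc)
  also have "\<dots> = \<phi> i x + (path_sum \<phi> \<sigma> k r (\<sigma> i x) + path_sum \<phi> \<sigma> k p (spow \<sigma> k r (\<sigma> i x)))"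
    using step maps_into by (simp add: path_sum_add_unitvec_nat)
  also have "\<dots> = path_sum \<phi> \<sigma> k (\<lambda>l. r l + unitvec_nat i l) x
      + path_sum \<phi> \<sigma> k p (spow \<sigma> k (\<lambda>l. r l + unitvec_nat i l) x)"
    using step by (simp add: spow_add_unitvec_nat path_sum_add_unitvec_nat add.assoc)
  finally show ?case .
qed

lemma path_sum_unitvec_nat: "i < k \<Longrightarrow> x \<in> X \<Longrightarrow> path_sum \<phi> \<sigma> k (unitvec_nat i) x = \<phi> i x"
  using path_sum_add_unitvec_nat[of k i x "\<lambda>_. 0"] by (simp add: path_sum_zero)

text \<open>Adding \<open>s\<close> resp. \<open>s'\<close> to both components turns \<open>(p, q)\<close> and \<open>(p', q')\<close> into the common
  representation \<open>(max p p', max p p' - (p - q))\<close>, and by \<open>path_sum_add\<close> this does not change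
  the difference.\<close>

lemma path_sum_diff_eq:
  assumes "idx k p" "idx k q" "idx k p'" "idx k q'" "x \<in> X" "y \<in> X"
    and "spow \<sigma> k p x = spow \<sigma> k q y" "spow \<sigma> k p' x = spow \<sigma> k q' y" "vdiff p q = vdiff p' q'"
  shows "path_sum \<phi> \<sigma> k p x - path_sum \<phi> \<sigma> k q y = path_sum \<phi> \<sigma> k p' x - path_sum \<phi> \<sigma> k q' y"
proof -
  define s where "s = (\<lambda>l. max (p l) (p' l) - p l)"
  define s' where "s' = (\<lambda>l. max (p l) (p' l) - p' l)"
  have diff: "int (p l) - int (q l) = int (p' l) - int (q' l)" for l
    using assms(9) unfolding vdiff_def by meson
  have "s l + q l = s' l + q' l" for l
    using diff[of l] unfolding s_def s'_def by linarith
  then have "(\<lambda>l. s l + p l) = (\<lambda>l. s' l + p' l)" "(\<lambda>l. s l + q l) = (\<lambda>l. s' l + q' l)"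
    by (auto simp: s_def s'_def)
  moreover have "path_sum \<phi> \<sigma> k (\<lambda>l. s l + p l) x - path_sum \<phi> \<sigma> k (\<lambda>l. s l + q l) y
      = path_sum \<phi> \<sigma> k p x - path_sum \<phi> \<sigma> k q y"
    "path_sum \<phi> \<sigma> k (\<lambda>l. s' l + p' l) x - path_sum \<phi> \<sigma> k (\<lambda>l. s' l + q' l) y
      = path_sum \<phi> \<sigma> k p' x - path_sum \<phi> \<sigma> k q' y"
    using assms by (simp_all add: path_sum_add)
  ultimately show ?thesis by simp
qed

lemma cocycle_of_eq:
  assumes "idx k p" "idx k q" "x \<in> X" "y \<in> X" "spow \<sigma> k p x = spow \<sigma> k q y"
  shows "cocycle_of k \<sigma> \<phi> (x, vdiff p q, y) = path_sum \<phi> \<sigma> k p x - path_sum \<phi> \<sigma> k q y"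
proof -
  let ?P = "\<lambda>(p', q'). idx k p' \<and> idx k q' \<and> vdiff p q = vdiff p' q' \<and> spow \<sigma> k p' x = spow \<sigma> k q' y"
  obtain p' q' where chosen: "(SOME pq. ?P pq) = (p', q')" by fastforce
  have "?P (p, q)" using assms by simp
  then have "?P (p', q')" using someI[of ?P "(p, q)"] chosen by simp
  then have "path_sum \<phi> \<sigma> k p' x - path_sum \<phi> \<sigma> k q' y = path_sum \<phi> \<sigma> k p x - path_sum \<phi> \<sigma> k q y"
    using path_sum_diff_eq[OF assms(1,2) _ _ assms(3,4,5), of p' q'] by simp
  then show ?thesis
    using chosen by (simp add: cocycle_of_def)
qed

lemma cocycle_of_generator: "i < k \<Longrightarrow> x \<in> X \<Longrightarrow> cocycle_of k \<sigma> \<phi> (x, unitvec i, \<sigma> i x) = \<phi> i x"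
  using cocycle_of_eq[of "unitvec_nat i" "\<lambda>_. 0" x "\<sigma> i x"]
  by (simp add: unitvec_eq_vdiff idx_unitvec_nat idx_zero maps_into spow_unitvec_nat spow_zero
      path_sum_unitvec_nat path_sum_zero)

text \<open>The composite of \<open>(x, p - q, y)\<close> and \<open>(y, p' - q', z)\<close> is represented by \<open>(p' + p, q + q')\<close>;
  expanding with \<open>path_sum_add\<close>, the two terms based at \<open>y\<close> cancel because \<open>p' + q = q + p'\<close>.\<close>

lemma is_cocycle_cocycle_of: "is_cocycle (cocycle_of k \<sigma> \<phi>)"
  unfolding is_cocycle_def
proof (intro allI impI)
  fix x m y n z
  assume "(x, m, y) \<in> grpd X \<sigma> k" "(y, n, z) \<in> grpd X \<sigma> k"
  then obtain p q p' q' where pq: "idx k p" "idx k q" "m = vdiff p q" "spow \<sigma> k p x = spow \<sigma> k q y"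
      and pq': "idx k p'" "idx k q'" "n = vdiff p' q'" "spow \<sigma> k p' y = spow \<sigma> k q' z"
      and in_X: "x \<in> X" "y \<in> X" "z \<in> X"
    unfolding grpd_def by auto
  define P where "P = (\<lambda>l. p' l + p l)"
  define Q where "Q = (\<lambda>l. q l + q' l)"
  have idx_PQ: "idx k P" "idx k Q" using pq pq' by (auto simp: idx_def P_def Q_def)
  have mn: "(\<lambda>i. m i + n i) = vdiff P Q" using pq pq' by (auto simp: vdiff_def P_def Q_def)
  have "spow \<sigma> k P x = spow \<sigma> k p' (spow \<sigma> k q y)" using pq in_X by (simp add: P_def spow_add)
  also have "\<dots> = spow \<sigma> k q (spow \<sigma> k p' y)" using pq pq' in_X by (intro spow_swap)
  also have "\<dots> = spow \<sigma> k Q z" using pq pq' in_X by (simp add: Q_def spow_add)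
  finally have PQ: "spow \<sigma> k P x = spow \<sigma> k Q z" .
  have split_P: "path_sum \<phi> \<sigma> k P x = path_sum \<phi> \<sigma> k p x + path_sum \<phi> \<sigma> k p' (spow \<sigma> k q y)"
    using pq in_X by (simp add: P_def path_sum_add)
  have split_Q: "path_sum \<phi> \<sigma> k Q z = path_sum \<phi> \<sigma> k q' z + path_sum \<phi> \<sigma> k q (spow \<sigma> k p' y)"
    using pq pq' in_X by (simp add: Q_def path_sum_add)
  have swap: "path_sum \<phi> \<sigma> k q y + path_sum \<phi> \<sigma> k p' (spow \<sigma> k q y)
      = path_sum \<phi> \<sigma> k p' y + path_sum \<phi> \<sigma> k q (spow \<sigma> k p' y)"
    using path_sum_add[of q y p'] path_sum_add[of p' y q] pq pq' in_X by (simp add: add.commute)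
  have c_PQ: "cocycle_of k \<sigma> \<phi> (x, \<lambda>i. m i + n i, z) = path_sum \<phi> \<sigma> k P x - path_sum \<phi> \<sigma> k Q z"
    unfolding mn by (rule cocycle_of_eq[OF idx_PQ in_X(1,3) PQ])
  have c_m: "cocycle_of k \<sigma> \<phi> (x, m, y) = path_sum \<phi> \<sigma> k p x - path_sum \<phi> \<sigma> k q y"
    unfolding pq(3) by (rule cocycle_of_eq[OF pq(1,2) in_X(1,2) pq(4)])
  have c_n: "cocycle_of k \<sigma> \<phi> (y, n, z) = path_sum \<phi> \<sigma> k p' y - path_sum \<phi> \<sigma> k q' z"
    unfolding pq'(3) by (rule cocycle_of_eq[OF pq'(1,2) in_X(2,3) pq'(4)])
  show "cocycle_of k \<sigma> \<phi> (x, \<lambda>i. m i + n i, z) = cocycle_of k \<sigma> \<phi> (x, m, y) + cocycle_of k \<sigma> \<phi> (y, n, z)"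
    unfolding c_PQ c_m c_n split_P split_Q using swap by (simp add: algebra_simps)
qed

end

end

lemma local_homeo_on_openin_image:
  assumes "local_homeo_on X f" "openin (top_of_set X) U"
  shows "openin (top_of_set X) (f ` U)"
proof (subst openin_subopen, intro ballI)
  fix y assume "y \<in> f ` U"
  then obtain x where x: "x \<in> U" "y = f x" by auto
  then have "x \<in> X" using assms(2) openin_imp_subset by blast
  then obtain V g where V: "x \<in> V" "openin (top_of_set X) V" "openin (top_of_set X) (f ` V)"
      "homeomorphism V (f ` V) f g"
    using assms(1) unfolding local_homeo_on_def by blast
  have "openin (top_of_set X) (U \<inter> V)" using assms(2) V(2) by blast
  then have "openin (top_of_set V) (U \<inter> V)"
    by (rule openin_subset_trans) (use V(2) openin_imp_subset in auto)
  then have "openin (top_of_set (f ` V)) (f ` (U \<inter> V))"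
    by (rule homeomorphism_imp_open_map[OF V(4)])
  then have "openin (top_of_set X) (f ` (U \<inter> V))" using V(3) openin_trans by blast
  then show "\<exists>T. openin (top_of_set X) T \<and> y \<in> T \<and> T \<subseteq> f ` U" using x V by blast
qed

locale commuting_local_homeos = commuting_maps X \<sigma> k
  for X :: "'a::topological_space set" and \<sigma> :: "nat \<Rightarrow> 'a \<Rightarrow> 'a" and k :: nat +
  assumes continuous: "i < k \<Longrightarrow> continuous_on X (\<sigma> i)"
    and local_homeo: "i < k \<Longrightarrow> local_homeo_on X (\<sigma> i)"
    and surjective: "i < k \<Longrightarrow> \<sigma> i ` X = X"
begin

lemma funpow_continuous_on: "i < k \<Longrightarrow> continuous_on X (\<sigma> i ^^ n)"
proof (induction n)
  case (Suc n)
  have "continuous_on X (\<lambda>x. \<sigma> i ((\<sigma> i ^^ n) x))"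
    by (rule continuous_on_compose2[OF continuous Suc.IH]) (use Suc.prems funpow_maps_into in auto)
  then show ?case by (simp add: o_def)
qed simp

lemma funpow_openin_image: "i < k \<Longrightarrow> openin (top_of_set X) U \<Longrightarrow> openin (top_of_set X) ((\<sigma> i ^^ n) ` U)"
proof (induction n)
  case (Suc n)
  have "(\<sigma> i ^^ Suc n) ` U = \<sigma> i ` ((\<sigma> i ^^ n) ` U)" by (simp add: image_image)
  then show ?case using Suc by (simp add: local_homeo_on_openin_image local_homeo)
qed simp

lemma funpow_image_eq: "i < k \<Longrightarrow> (\<sigma> i ^^ n) ` X = X"
proof (induction n)
  case (Suc n)
  have "(\<sigma> i ^^ Suc n) ` X = \<sigma> i ` ((\<sigma> i ^^ n) ` X)" by (simp add: image_image)
  then show ?case using Suc by (simp add: surjective)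
qed simp

lemma spow_continuous_on: "k' \<le> k \<Longrightarrow> continuous_on X (spow \<sigma> k' p)"
proof (induction k')
  case (Suc k')
  have "continuous_on X (\<lambda>x. spow \<sigma> k' p ((\<sigma> k' ^^ p k') x))"
    by (rule continuous_on_compose2[OF Suc.IH funpow_continuous_on]) (use Suc.prems funpow_maps_into in auto)
  then show ?case by (simp add: o_def)
qed simp

lemma spow_openin_image: "k' \<le> k \<Longrightarrow> openin (top_of_set X) U \<Longrightarrow> openin (top_of_set X) (spow \<sigma> k' p ` U)"
proof (induction k' arbitrary: U)
  case (Suc k')
  have "spow \<sigma> (Suc k') p ` U = spow \<sigma> k' p ` ((\<sigma> k' ^^ p k') ` U)" by (simp add: image_image)
  then show ?case using Suc by (simp add: funpow_openin_image)
qed simp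

lemma spow_image_eq: "k' \<le> k \<Longrightarrow> spow \<sigma> k' p ` X = X"
proof (induction k')
  case (Suc k')
  have "spow \<sigma> (Suc k') p ` X = spow \<sigma> k' p ` ((\<sigma> k' ^^ p k') ` X)" by (simp add: image_image)
  then show ?case using Suc by (simp add: funpow_image_eq)
qed simp

lemma Zset_in_grpd_basis:
  assumes "idx k p" "idx k q"
  shows "Zset \<sigma> k X p q X \<in> grpd_basis X \<sigma> k"
proof -
  have "spow \<sigma> k p ` X = spow \<sigma> k q ` X" by (simp add: spow_image_eq)
  moreover have "openin (top_of_set X) X" by simp
  ultimately show ?thesis unfolding grpd_basis_def using assms by blast
qed

lemma openin_grpd_top_Zset:
  assumes A: "openin (top_of_set X) A" and B: "openin (top_of_set X) B" and "idx k p" "idx k q"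
  shows "openin (grpd_top X \<sigma> k) (Zset \<sigma> k A p q B)"
proof -
  define A' where "A' = A \<inter> spow \<sigma> k p -` (spow \<sigma> k q ` B)"
  define B' where "B' = B \<inter> spow \<sigma> k q -` (spow \<sigma> k p ` A)"
  have "A \<subseteq> X" "B \<subseteq> X" using A B by (auto dest: openin_imp_subset)
  have "openin (top_of_set X) (X \<inter> spow \<sigma> k p -` (spow \<sigma> k q ` B))"
    by (rule continuous_openin_preimage[OF spow_continuous_on _ spow_openin_image]) (use B spow_maps_into in auto)
  moreover have "A' = A \<inter> (X \<inter> spow \<sigma> k p -` (spow \<sigma> k q ` B))"
    using \<open>A \<subseteq> X\<close> unfolding A'_def by blast
  ultimately have A': "openin (top_of_set X) A'"
    using A by (simp add: openin_Int)
  have "openin (top_of_set X) (X \<inter> spow \<sigma> k q -` (spow \<sigma> k p ` A))"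
    by (rule continuous_openin_preimage[OF spow_continuous_on _ spow_openin_image]) (use A spow_maps_into in auto)
  moreover have "B' = B \<inter> (X \<inter> spow \<sigma> k q -` (spow \<sigma> k p ` A))"
    using \<open>B \<subseteq> X\<close> unfolding B'_def by blast
  ultimately have B': "openin (top_of_set X) B'"
    using B by (simp add: openin_Int)
  have "spow \<sigma> k p ` A' = spow \<sigma> k q ` B'"
    unfolding A'_def B'_def image_Int_vimage by (simp add: Int_commute)
  then have "Zset \<sigma> k A' p q B' \<in> grpd_basis X \<sigma> k"
    unfolding grpd_basis_def using A' B' assms by blast
  moreover have "Zset \<sigma> k A' p q B' = Zset \<sigma> k A p q B"
    unfolding Zset_def A'_def B'_def by (blast intro: image_eqI sym)
  moreover have "Zset \<sigma> k A p q B \<subseteq> grpd X \<sigma> k"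
    using \<open>A \<subseteq> X\<close> \<open>B \<subseteq> X\<close> assms unfolding Zset_def grpd_def by blast
  ultimately show ?thesis
    unfolding grpd_top_def openin_subtopology using topology_generated_by_Basis by fastforce
qed

lemma continuous_map_generator:
  assumes c: "continuous_map (grpd_top X \<sigma> k) euclidean c" and "i < k"
  shows "continuous_on X (\<lambda>x. c (x, unitvec i, \<sigma> i x))"
proof -
  let ?h = "\<lambda>x. (x, unitvec i, \<sigma> i x)"
  have "openin (top_of_set X) (?h -` Zset \<sigma> k A p q B \<inter> X)"
    if A: "openin (top_of_set X) A" and B: "openin (top_of_set X) B" for A p q B
  proof (cases "unitvec i = vdiff p q")
    case True
    then have "p = (\<lambda>l. q l + unitvec_nat i l)" by (rule vdiff_eq_unitvec_imp)
    then have "spow \<sigma> k p x = spow \<sigma> k q (\<sigma> i x)" if "x \<in> X" for x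
      using \<open>i < k\<close> that by (simp add: spow_add_unitvec_nat)
    then have "?h -` Zset \<sigma> k A p q B \<inter> X = A \<inter> (X \<inter> \<sigma> i -` B)"
      using True A unfolding Zset_def by (auto dest: openin_imp_subset)
    moreover have "openin (top_of_set X) (X \<inter> \<sigma> i -` B)"
      using continuous_openin_preimage[OF continuous[OF \<open>i < k\<close>] _ B] maps_into \<open>i < k\<close> by blast
    ultimately show ?thesis using A by auto
  next
    case False
    then show ?thesis unfolding Zset_def by auto
  qed
  moreover have "?h ` X \<subseteq> \<Union> (grpd_basis X \<sigma> k)"
  proof
    fix g assume "g \<in> ?h ` X"
    then have "g \<in> Zset \<sigma> k X (unitvec_nat i) (\<lambda>_. 0) X"
      using \<open>i < k\<close> unfolding Zset_def unitvec_eq_vdiff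
      by (auto simp: spow_unitvec_nat spow_zero maps_into)
    then show "g \<in> \<Union> (grpd_basis X \<sigma> k)"
      using Zset_in_grpd_basis[OF idx_unitvec_nat[OF \<open>i < k\<close>] idx_zero] by blast
  qed
  ultimately have "continuous_map (top_of_set X) (topology_generated_by (grpd_basis X \<sigma> k)) ?h"
    by (intro continuous_on_generated_topo) (auto simp: grpd_basis_def)
  then have "continuous_map (top_of_set X) (grpd_top X \<sigma> k) ?h"
    unfolding grpd_top_def
    by (rule continuous_map_into_subtopology) (use generator_in_grpd \<open>i < k\<close> in auto)
  from continuous_map_compose[OF this c] show ?thesis by (simp add: o_def)
qed

context
  fixes \<phi> :: "nat \<Rightarrow> 'a \<Rightarrow> 'h::topological_ab_group_add"
  assumes \<phi>_continuous: "\<And>i. i < k \<Longrightarrow> continuous_on X (\<phi> i)"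
begin

lemma orbit_sum_continuous_on: "i < k \<Longrightarrow> continuous_on X (orbit_sum \<phi> \<sigma> i n)"
proof (induction n)
  case (Suc n)
  have "continuous_on X (\<lambda>x. \<phi> i ((\<sigma> i ^^ n) x))"
    by (rule continuous_on_compose2[OF \<phi>_continuous funpow_continuous_on])
      (use Suc.prems funpow_maps_into in auto)
  then show ?case using Suc by (simp add: continuous_on_add)
qed (simp add: continuous_on_const)

lemma path_sum_continuous_on: "k' \<le> k \<Longrightarrow> continuous_on X (path_sum \<phi> \<sigma> k' p)"
proof (induction k')
  case (Suc k')
  have "continuous_on X (\<lambda>x. path_sum \<phi> \<sigma> k' p ((\<sigma> k' ^^ p k') x))"
    by (rule continuous_on_compose2[OF Suc.IH funpow_continuous_on]) (use Suc.prems funpow_maps_into in auto)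
  then show ?case using Suc orbit_sum_continuous_on by (simp add: continuous_on_add)
qed (simp add: continuous_on_const)

lemma continuous_map_cocycle_of:
  assumes "compatible \<phi>"
  shows "continuous_map (grpd_top X \<sigma> k) euclidean (cocycle_of k \<sigma> \<phi>)"
proof -
  have "openin (grpd_top X \<sigma> k) {g \<in> topspace (grpd_top X \<sigma> k). cocycle_of k \<sigma> \<phi> g \<in> W}"
    if "open W" for W
  proof (subst openin_subopen, intro ballI)
    fix g assume g_in: "g \<in> {g \<in> topspace (grpd_top X \<sigma> k). cocycle_of k \<sigma> \<phi> g \<in> W}"
    then obtain x p q y where g: "g = (x, vdiff p q, y)" "idx k p" "idx k q" "x \<in> X" "y \<in> X"
        "spow \<sigma> k p x = spow \<sigma> k q y"
      unfolding grpd_top_def grpd_def by auto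
    define F where "F = (\<lambda>z. path_sum \<phi> \<sigma> k p (fst z) - path_sum \<phi> \<sigma> k q (snd z))"
    have "continuous_on (X \<times> X) F"
      unfolding F_def
      by (intro continuous_on_diff continuous_on_compose2[OF path_sum_continuous_on]
          continuous_on_fst continuous_on_snd continuous_on_id) auto
    then have F_open: "openin (top_of_set (X \<times> X)) ((X \<times> X) \<inter> F -` W)"
      using continuous_openin_preimage_gen that by blast
    have xy_in: "(x, y) \<in> (X \<times> X) \<inter> F -` W"
      using g_in g cocycle_of_eq[OF assms] by (simp add: F_def)
    obtain A B where AB: "openin (top_of_set X) A" "x \<in> A" "openin (top_of_set X) B" "y \<in> B"
        "A \<times> B \<subseteq> (X \<times> X) \<inter> F -` W"
      by (rule Times_in_interior_subtopology[OF xy_in F_open])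
    have T_open: "openin (grpd_top X \<sigma> k) (Zset \<sigma> k A p q B)"
      using AB g by (intro openin_grpd_top_Zset) auto
    moreover have "g \<in> Zset \<sigma> k A p q B"
      unfolding Zset_def using g AB by auto
    moreover have "Zset \<sigma> k A p q B \<subseteq> {g \<in> topspace (grpd_top X \<sigma> k). cocycle_of k \<sigma> \<phi> g \<in> W}"
    proof
      fix t assume t: "t \<in> Zset \<sigma> k A p q B"
      then obtain x' y' where t': "t = (x', vdiff p q, y')" "x' \<in> A" "y' \<in> B"
          "spow \<sigma> k p x' = spow \<sigma> k q y'"
        unfolding Zset_def by blast
      then have "cocycle_of k \<sigma> \<phi> t = F (x', y')"
        using g AB cocycle_of_eq[OF assms] by (auto simp: F_def dest: openin_imp_subset)
      then show "t \<in> {g \<in> topspace (grpd_top X \<sigma> k). cocycle_of k \<sigma> \<phi> g \<in> W}"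
        using AB(5) t' t openin_subset[OF T_open] by auto
    qed
    ultimately show "\<exists>T. openin (grpd_top X \<sigma> k) T \<and> g \<in> T \<and>
        T \<subseteq> {g \<in> topspace (grpd_top X \<sigma> k). cocycle_of k \<sigma> \<phi> g \<in> W}"
      by blast
  qed
  then show ?thesis unfolding continuous_map by auto
qed

end

lemma cont_cocycle_iff:
  "cont_cocycle X \<sigma> k c \<longleftrightarrow> continuous_map (grpd_top X \<sigma> k) euclidean c \<and> is_cocycle c"
  by (simp add: cont_cocycle_def is_cocycle_def)

lemma compatible_iff_unique_cocycle:
  fixes \<phi> :: "nat \<Rightarrow> 'a \<Rightarrow> 'h::topological_ab_group_add"
  assumes "\<And>i. i < k \<Longrightarrow> continuous_on X (\<phi> i)"
  shows "compatible \<phi> \<longleftrightarrow>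
    (\<exists>c. cont_cocycle X \<sigma> k c \<and> (\<forall>i<k. \<forall>x\<in>X. c (x, unitvec i, \<sigma> i x) = \<phi> i x) \<and>
       (\<forall>c'. cont_cocycle X \<sigma> k c' \<and> (\<forall>i<k. \<forall>x\<in>X. c' (x, unitvec i, \<sigma> i x) = \<phi> i x)
          \<longrightarrow> (\<forall>g\<in>grpd X \<sigma> k. c' g = c g)))"
proof
  assume compatible: "compatible \<phi>"
  have "cont_cocycle X \<sigma> k (cocycle_of k \<sigma> \<phi>)"
    using continuous_map_cocycle_of[OF assms compatible] is_cocycle_cocycle_of[OF compatible]
    by (simp add: cont_cocycle_iff)
  moreover have "\<forall>i<k. \<forall>x\<in>X. cocycle_of k \<sigma> \<phi> (x, unitvec i, \<sigma> i x) = \<phi> i x"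
    using cocycle_of_generator[OF compatible] by blast
  moreover have "c' g = cocycle_of k \<sigma> \<phi> g"
    if "cont_cocycle X \<sigma> k c'" "\<forall>i<k. \<forall>x\<in>X. c' (x, unitvec i, \<sigma> i x) = \<phi> i x" "g \<in> grpd X \<sigma> k"
    for c' :: "'a \<times> (nat \<Rightarrow> int) \<times> 'a \<Rightarrow> 'h" and g
  proof (rule is_cocycle_eqI[OF _ is_cocycle_cocycle_of[OF compatible] _ that(3)])
    show "is_cocycle c'" using that(1) by (simp add: cont_cocycle_iff)
    show "c' (x, unitvec i, \<sigma> i x) = cocycle_of k \<sigma> \<phi> (x, unitvec i, \<sigma> i x)" if "i < k" "x \<in> X" for i x
      using that \<open>\<forall>i<k. \<forall>x\<in>X. c' (x, unitvec i, \<sigma> i x) = \<phi> i x\<close> cocycle_of_generator[OF compatible] by simp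
  qed
  ultimately show "\<exists>c. cont_cocycle X \<sigma> k c \<and> (\<forall>i<k. \<forall>x\<in>X. c (x, unitvec i, \<sigma> i x) = \<phi> i x) \<and>
       (\<forall>c'. cont_cocycle X \<sigma> k c' \<and> (\<forall>i<k. \<forall>x\<in>X. c' (x, unitvec i, \<sigma> i x) = \<phi> i x)
          \<longrightarrow> (\<forall>g\<in>grpd X \<sigma> k. c' g = c g))"
    by blast
next
  assume "\<exists>c. cont_cocycle X \<sigma> k c \<and> (\<forall>i<k. \<forall>x\<in>X. c (x, unitvec i, \<sigma> i x) = \<phi> i x) \<and>
       (\<forall>c'. cont_cocycle X \<sigma> k c' \<and> (\<forall>i<k. \<forall>x\<in>X. c' (x, unitvec i, \<sigma> i x) = \<phi> i x)
          \<longrightarrow> (\<forall>g\<in>grpd X \<sigma> k. c' g = c g))"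
  then obtain c where "is_cocycle c" and "\<forall>i<k. \<forall>x\<in>X. c (x, unitvec i, \<sigma> i x) = \<phi> i x"
    unfolding cont_cocycle_iff by blast
  then show "compatible \<phi>"
    using compatible_generators[of c] maps_into unfolding compatible_def by simp
qed

lemma cont_cocycle_generators:
  assumes "cont_cocycle X \<sigma> k c"
  shows "\<exists>\<phi>. (\<forall>i<k. continuous_on X (\<phi> i)) \<and> compatible \<phi> \<and>
    (\<forall>i<k. \<forall>x\<in>X. c (x, unitvec i, \<sigma> i x) = \<phi> i x)"
  using assms continuous_map_generator compatible_generators unfolding cont_cocycle_iff
  by (intro exI[of _ "\<lambda>i x. c (x, unitvec i, \<sigma> i x)"]) blast

lemma coboundary_iff_generators:
  assumes "is_cocycle c"
  shows "coboundary X \<sigma> k c \<longleftrightarrow>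
    (\<exists>\<psi>. continuous_on X \<psi> \<and> (\<forall>i<k. \<forall>x\<in>X. c (x, unitvec i, \<sigma> i x) = \<psi> x - \<psi> (\<sigma> i x)))"
proof
  assume "coboundary X \<sigma> k c"
  then show "\<exists>\<psi>. continuous_on X \<psi> \<and> (\<forall>i<k. \<forall>x\<in>X. c (x, unitvec i, \<sigma> i x) = \<psi> x - \<psi> (\<sigma> i x))"
    unfolding coboundary_def using generator_in_grpd by blast
next
  assume "\<exists>\<psi>. continuous_on X \<psi> \<and> (\<forall>i<k. \<forall>x\<in>X. c (x, unitvec i, \<sigma> i x) = \<psi> x - \<psi> (\<sigma> i x))"
  then obtain \<psi> where \<psi>: "continuous_on X \<psi>" "\<forall>i<k. \<forall>x\<in>X. c (x, unitvec i, \<sigma> i x) = \<psi> x - \<psi> (\<sigma> i x)"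
    by blast
  have \<delta>\<psi>: "is_cocycle (\<lambda>(x, m, y). \<psi> x - \<psi> y)"
    unfolding is_cocycle_def by simp
  have "c (x, m, y) = \<psi> x - \<psi> y" if "(x, m, y) \<in> grpd X \<sigma> k" for x m y
    using is_cocycle_eqI[OF assms \<delta>\<psi> _ that] \<psi>(2) by (simp only: prod.case)
  then show "coboundary X \<sigma> k c"
    unfolding coboundary_def using \<psi>(1) by blast
qed

end

theorem proposition3p8:
  fixes X :: "'a::metric_space set" and \<sigma> :: "nat \<Rightarrow> 'a \<Rightarrow> 'a" and k :: nat
    and \<phi> :: "nat \<Rightarrow> 'a \<Rightarrow> 'h::{topological_ab_group_add, t2_space}"
  assumes H_lc: "locally_compact_space (euclidean :: 'h topology)"
    and X_compact: "compact X"
    and \<sigma>_cont: "\<And>i. i < k \<Longrightarrow> continuous_on X (\<sigma> i)"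
    and \<sigma>_surj: "\<And>i. i < k \<Longrightarrow> \<sigma> i ` X = X"
    and \<sigma>_lh: "\<And>i. i < k \<Longrightarrow> local_homeo_on X (\<sigma> i)"
    and \<sigma>_comm: "\<And>i j x. i < k \<Longrightarrow> j < k \<Longrightarrow> x \<in> X \<Longrightarrow> \<sigma> i (\<sigma> j x) = \<sigma> j (\<sigma> i x)"
    and \<phi>_cont: "\<And>i. i < k \<Longrightarrow> continuous_on X (\<phi> i)"
  shows "((\<forall>i<k. \<forall>j<k. \<forall>x\<in>X. \<phi> i x + \<phi> j (\<sigma> i x) = \<phi> j x + \<phi> i (\<sigma> j x))
          \<longleftrightarrow>
          (\<exists>c :: 'a \<times> (nat \<Rightarrow> int) \<times> 'a \<Rightarrow> 'h.
             cont_cocycle X \<sigma> k c \<and> (\<forall>i<k. \<forall>x\<in>X. c (x, unitvec i, \<sigma> i x) = \<phi> i x) \<and>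
             (\<forall>c'. cont_cocycle X \<sigma> k c' \<and> (\<forall>i<k. \<forall>x\<in>X. c' (x, unitvec i, \<sigma> i x) = \<phi> i x)
                \<longrightarrow> (\<forall>g\<in>grpd X \<sigma> k. c' g = c g))))
       \<and> (\<forall>c :: 'a \<times> (nat \<Rightarrow> int) \<times> 'a \<Rightarrow> 'h. cont_cocycle X \<sigma> k c \<longrightarrow>
            (\<exists>\<phi>'. (\<forall>i<k. continuous_on X (\<phi>' i)) \<and>
               (\<forall>i<k. \<forall>j<k. \<forall>x\<in>X. \<phi>' i x + \<phi>' j (\<sigma> i x) = \<phi>' j x + \<phi>' i (\<sigma> j x)) \<and>
               (\<forall>i<k. \<forall>x\<in>X. c (x, unitvec i, \<sigma> i x) = \<phi>' i x)))
       \<and> (\<forall>c :: 'a \<times> (nat \<Rightarrow> int) \<times> 'a \<Rightarrow> 'h. cont_cocycle X \<sigma> k c \<longrightarrow>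
            (coboundary X \<sigma> k c \<longleftrightarrow>
             (\<exists>\<psi>. continuous_on X \<psi> \<and>
                (\<forall>i<k. \<forall>x\<in>X. c (x, unitvec i, \<sigma> i x) = \<psi> x - \<psi> (\<sigma> i x)))))"
proof -
  interpret commuting_local_homeos X \<sigma> k
  proof
    show "\<sigma> i x \<in> X" if "i < k" "x \<in> X" for i x
      using \<sigma>_surj that by blast
  qed (fact \<sigma>_comm \<sigma>_cont \<sigma>_lh \<sigma>_surj)+
  have "\<forall>c :: 'a \<times> (nat \<Rightarrow> int) \<times> 'a \<Rightarrow> 'h. cont_cocycle X \<sigma> k c \<longrightarrow>
      (\<exists>\<phi>'. (\<forall>i<k. continuous_on X (\<phi>' i)) \<and> compatible \<phi>' \<and>
         (\<forall>i<k. \<forall>x\<in>X. c (x, unitvec i, \<sigma> i x) = \<phi>' i x))"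
    using cont_cocycle_generators by blast
  moreover have "\<forall>c :: 'a \<times> (nat \<Rightarrow> int) \<times> 'a \<Rightarrow> 'h. cont_cocycle X \<sigma> k c \<longrightarrow>
      (coboundary X \<sigma> k c \<longleftrightarrow>
       (\<exists>\<psi>. continuous_on X \<psi> \<and> (\<forall>i<k. \<forall>x\<in>X. c (x, unitvec i, \<sigma> i x) = \<psi> x - \<psi> (\<sigma> i x))))"
    using coboundary_iff_generators unfolding cont_cocycle_iff by blast
  ultimately show ?thesis
    using compatible_iff_unique_cocycle[of \<phi>] \<phi>_cont unfolding compatible_def by blast
qed

end
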